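(* Let $\mathcal{N}$ be an ITPN. If $(M,I)\to(M',I')$ in the interval-based semantics and $(M,I)\approx(M,c)$, then there is a clock valuation $c'$ such that $(M,c)\mapsto(M',c')$ and $(M',I')\approx(M',c')$.
   Context: An ITPN is $\mathcal{N}=\langle P,T,\emptyset,\mathrm{Pre},\mathrm{Post},\mathrm{Inh},M_0,J,\mathit{true}\rangle$ where $P$ (places) and $T$ (transitions) are disjoint non-empty finite sets, $\mathrm{Pre},\mathrm{Post},\mathrm{Inh}:T\to\mathbb{N}^P$, $M_0\in\mathbb{N}^P$, and $J$ assigns to each $t\in T$ an interval with left endpoint $\downarrow J(t)\in\mathbb{Q}_{\ge 0}$ and right endpoint $\uparrow J(t)\in\mathbb{Q}_{\ge0}\cup\{\infty\}$. Time values are non-negative rationals; $\infty-\delta=\infty$. Markings $M\in\mathbb{N}^P$ are compared/added pointwise. $t$ is enabled in $M$ if $M\ge\mathrm{Pre}(t)$; inhibited if some $p$ has $\mathrm{Inh}(t)(p)>0$ and $M(p)\ge\mathrm{Inh}(t)(p)$; active if enabled and not inhibited. $t$ is newly enabled by firing $t_f$ in $M$ iff $\mathrm{Pre}(t)\le M-\mathrm{Pre}(t_f)+\mathrm{Post}(t_f)$ and ($t=t_f$ or not $\mathrm{Pre}(t)\le M-\mathrm{Pre}(t_f)$). Interval-based semantics: states $(M,I)$ with $I(t)$ an interval with endpoints $\downarrow I(t)\in\mathbb{Q}$, $\uparrow I(t)\in\mathbb{Q}\cup\{\infty\}$. $(M,I)\xrightarrow{\delta}(M,I')$ ($\delta\in\mathbb{Q}_{\ge0}$)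 iff for all $t$: $I'(t)=I(t)$ if $t$ is enabled and inhibited in $M$, otherwise $\downarrow I'(t)=\max(0,\downarrow I(t)-\delta)$, $\uparrow I'(t)=\uparrow I(t)-\delta$; and $M\ge\mathrm{Pre}(t)\Rightarrow\uparrow I'(t)\ge0$. $(M,I)\xrightarrow{t_f}(M',I')$ iff $t_f$ active in $M$, $\downarrow I(t_f)=0$, $M'=M-\mathrm{Pre}(t_f)+\mathrm{Post}(t_f)$, and $I'(t)=J(t)$ if $t$ newly enabled by firing $t_f$ in $M$, else $I'(t)=I(t)$. $(M,I)\to(M',I')$ iff $(M,I)\xrightarrow{\delta}(M'',I'')\xrightarrow{t_f}(M',I')$ for some $\delta,t_f,(M'',I'')$. Clock-based semantics: states $(M,c)$ with $c:T\to\mathbb{Q}_{\ge0}$. $\mathrm{mte}(M,c)=\min\{\uparrow J(t)-c(t): t\text{ active in }M,\ \uparrow J(t)\neq\infty\}$ ($\infty$ if empty). Tick: $(M,c)\to_{\mathrm{tick}}(M,c')$ iff some $\tau\in\mathbb{Q}_{\ge0}$, $\tau\le\mathrm{mte}(M,c)$, with $c'(t)=c(t)+\tau$ for $t$ active in $M$ and $c'(t)=c(t)$ otherwise. Apply: $(M,c)\to_{\mathrm{apply}}(M',c')$ iff some $t_f$ active in $M$ with $\downarrow J(t_f)\le c(t_f)\le\uparrow J(t_f)$, $M'=M-\mathrm{Pre}(t_f)+\mathrm{Post}(t_f)$, $c'(t_f)=0$, and for $t\neq t_f$, $c'(t)=c(t)$ if $\mathrm{Pre}(t)\le M-\mathrm{Pre}(t_f)$,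 else $0$. $(M,c)\mapsto(M',c')$ iff $(M,c)\to_{\mathrm{tick}}s\to_{\mathrm{apply}}(M',c')$ for some $s$. $(M,I)\approx(M',c)$ iff $M'=M$ and for every $t$: if $t$ not enabled in $M$ then $c(t)=0$; otherwise if $\uparrow J(t)\ne\infty$ then $c(t)=\uparrow J(t)-\uparrow I(t)$; if $\uparrow J(t)=\infty$ and $\downarrow I(t)>0$ then $c(t)=\downarrow J(t)-\downarrow I(t)$; if $\uparrow J(t)=\infty$ and $\downarrow I(t)\le0$ then $c(t)\ge\downarrow J(t)$ (arbitrary such value).
   Formalization: The state (M,I) ranges only over states reachable from the initial state $(M_0,J)$ by steps $\to$ of the interval-based semantics. The paper assumes this as well. *)

theory Defs
  imports Main "HOL.Rat"
begin

datatype ext = Fin rat | Infty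

fun ext_minus :: "ext \<Rightarrow> rat \<Rightarrow> ext" where
  "ext_minus (Fin a) d = Fin (a - d)"
| "ext_minus Infty d = Infty"

fun ext_le :: "ext \<Rightarrow> ext \<Rightarrow> bool" where
  "ext_le _ Infty = True"
| "ext_le Infty (Fin _) = False"
| "ext_le (Fin a) (Fin b) = (a \<le> b)"

text \<open>An interval is represented by its pair of endpoints (lower, upper).
  Net: Pre, Post, Inh :: 't => 'p => nat, initial marking M0, static intervals J.\<close>

definition valid_J :: "('t \<Rightarrow> rat \<times> ext) \<Rightarrow> bool" where
  "valid_J J = (\<forall>t. fst (J t) \<ge> 0 \<and> ext_le (Fin 0) (snd (J t)))"

definition enabled :: "('t \<Rightarrow> 'p \<Rightarrow> nat) \<Rightarrow> ('p \<Rightarrow> nat) \<Rightarrow> 't \<Rightarrow> bool" where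
  "enabled Pre M t = (Pre t \<le> M)"

definition inhibited :: "('t \<Rightarrow> 'p \<Rightarrow> nat) \<Rightarrow> ('p \<Rightarrow> nat) \<Rightarrow> 't \<Rightarrow> bool" where
  "inhibited Inh M t = (\<exists>p. Inh t p > 0 \<and> M p \<ge> Inh t p)"

definition active :: "('t \<Rightarrow> 'p \<Rightarrow> nat) \<Rightarrow> ('t \<Rightarrow> 'p \<Rightarrow> nat) \<Rightarrow> ('p \<Rightarrow> nat) \<Rightarrow> 't \<Rightarrow> bool" where
  "active Pre Inh M t = (enabled Pre M t \<and> \<not> inhibited Inh M t)"

definition fire :: "('t \<Rightarrow> 'p \<Rightarrow> nat) \<Rightarrow> ('t \<Rightarrow> 'p \<Rightarrow> nat) \<Rightarrow> ('p \<Rightarrow> nat) \<Rightarrow> 't \<Rightarrow> ('p \<Rightarrow> nat)" where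
  "fire Pre Post M tf = (\<lambda>p. M p - Pre tf p + Post tf p)"

definition newly_enabled :: "('t \<Rightarrow> 'p \<Rightarrow> nat) \<Rightarrow> ('t \<Rightarrow> 'p \<Rightarrow> nat) \<Rightarrow> ('p \<Rightarrow> nat) \<Rightarrow> 't \<Rightarrow> 't \<Rightarrow> bool" where
  "newly_enabled Pre Post M tf t =
     (Pre t \<le> fire Pre Post M tf \<and> (t = tf \<or> \<not> Pre t \<le> (\<lambda>p. M p - Pre tf p)))"

definition int_delay :: "('t \<Rightarrow> 'p \<Rightarrow> nat) \<Rightarrow> ('t \<Rightarrow> 'p \<Rightarrow> nat) \<Rightarrow> ('p \<Rightarrow> nat)
     \<Rightarrow> ('t \<Rightarrow> rat \<times> ext) \<Rightarrow> rat \<Rightarrow> ('t \<Rightarrow> rat \<times> ext) \<Rightarrow> bool" where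
  "int_delay Pre Inh M I \<delta> I' =
     (\<delta> \<ge> 0 \<and>
      (\<forall>t. (if enabled Pre M t \<and> inhibited Inh M t then I' t = I t
            else fst (I' t) = max 0 (fst (I t) - \<delta>) \<and> snd (I' t) = ext_minus (snd (I t)) \<delta>)
          \<and> (enabled Pre M t \<longrightarrow> ext_le (Fin 0) (snd (I' t)))))"

definition int_fire :: "('t \<Rightarrow> 'p \<Rightarrow> nat) \<Rightarrow> ('t \<Rightarrow> 'p \<Rightarrow> nat) \<Rightarrow> ('t \<Rightarrow> 'p \<Rightarrow> nat)
     \<Rightarrow> ('t \<Rightarrow> rat \<times> ext) \<Rightarrow> ('p \<Rightarrow> nat) \<Rightarrow> ('t \<Rightarrow> rat \<times> ext) \<Rightarrow> 't
     \<Rightarrow> ('p \<Rightarrow> nat) \<Rightarrow> ('t \<Rightarrow> rat \<times> ext) \<Rightarrow> bool" where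
  "int_fire Pre Post Inh J M I tf M' I' =
     (active Pre Inh M tf \<and> fst (I tf) = 0 \<and> M' = fire Pre Post M tf \<and>
      (\<forall>t. I' t = (if newly_enabled Pre Post M tf t then J t else I t)))"

definition int_step :: "('t \<Rightarrow> 'p \<Rightarrow> nat) \<Rightarrow> ('t \<Rightarrow> 'p \<Rightarrow> nat) \<Rightarrow> ('t \<Rightarrow> 'p \<Rightarrow> nat)
     \<Rightarrow> ('t \<Rightarrow> rat \<times> ext) \<Rightarrow> ('p \<Rightarrow> nat) \<times> ('t \<Rightarrow> rat \<times> ext)
     \<Rightarrow> ('p \<Rightarrow> nat) \<times> ('t \<Rightarrow> rat \<times> ext) \<Rightarrow> bool" where
  "int_step Pre Post Inh J s s' =
     (\<exists>\<delta> I'' tf. int_delay Pre Inh (fst s) (snd s) \<delta> I''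
                \<and> int_fire Pre Post Inh J (fst s) I'' tf (fst s') (snd s'))"

definition int_reachable :: "('t \<Rightarrow> 'p \<Rightarrow> nat) \<Rightarrow> ('t \<Rightarrow> 'p \<Rightarrow> nat) \<Rightarrow> ('t \<Rightarrow> 'p \<Rightarrow> nat)
     \<Rightarrow> ('t \<Rightarrow> rat \<times> ext) \<Rightarrow> ('p \<Rightarrow> nat) \<Rightarrow> ('p \<Rightarrow> nat) \<times> ('t \<Rightarrow> rat \<times> ext) \<Rightarrow> bool" where
  "int_reachable Pre Post Inh J M0 s = (int_step Pre Post Inh J)\<^sup>*\<^sup>* (M0, J) s"

definition clock_val :: "('t \<Rightarrow> rat) \<Rightarrow> bool" where
  "clock_val c = (\<forall>t. c t \<ge> 0)"

definition mte :: "('t \<Rightarrow> 'p \<Rightarrow> nat) \<Rightarrow> ('t \<Rightarrow> 'p \<Rightarrow> nat) \<Rightarrow> ('t \<Rightarrow> rat \<times> ext)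
     \<Rightarrow> ('p \<Rightarrow> nat) \<Rightarrow> ('t \<Rightarrow> rat) \<Rightarrow> ext" where
  "mte Pre Inh J M c =
     (let S = {u - c t | t u. active Pre Inh M t \<and> snd (J t) = Fin u}
      in if S = {} then Infty else Fin (Min S))"

definition tick :: "('t \<Rightarrow> 'p \<Rightarrow> nat) \<Rightarrow> ('t \<Rightarrow> 'p \<Rightarrow> nat) \<Rightarrow> ('t \<Rightarrow> rat \<times> ext)
     \<Rightarrow> ('p \<Rightarrow> nat) \<Rightarrow> ('t \<Rightarrow> rat) \<Rightarrow> ('t \<Rightarrow> rat) \<Rightarrow> bool" where
  "tick Pre Inh J M c c' =
     (\<exists>\<tau>. \<tau> \<ge> 0 \<and> ext_le (Fin \<tau>) (mte Pre Inh J M c) \<and>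
          c' = (\<lambda>t. if active Pre Inh M t then c t + \<tau> else c t))"

definition apply_tr :: "('t \<Rightarrow> 'p \<Rightarrow> nat) \<Rightarrow> ('t \<Rightarrow> 'p \<Rightarrow> nat) \<Rightarrow> ('t \<Rightarrow> 'p \<Rightarrow> nat)
     \<Rightarrow> ('t \<Rightarrow> rat \<times> ext) \<Rightarrow> ('p \<Rightarrow> nat) \<Rightarrow> ('t \<Rightarrow> rat) \<Rightarrow> ('p \<Rightarrow> nat) \<Rightarrow> ('t \<Rightarrow> rat) \<Rightarrow> bool" where
  "apply_tr Pre Post Inh J M c M' c' =
     (\<exists>tf. active Pre Inh M tf \<and> fst (J tf) \<le> c tf \<and> ext_le (Fin (c tf)) (snd (J tf)) \<and>
           M' = fire Pre Post M tf \<and> c' tf = 0 \<and>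
           (\<forall>t. t \<noteq> tf \<longrightarrow> c' t = (if Pre t \<le> (\<lambda>p. M p - Pre tf p) then c t else 0)))"

definition clock_step :: "('t \<Rightarrow> 'p \<Rightarrow> nat) \<Rightarrow> ('t \<Rightarrow> 'p \<Rightarrow> nat) \<Rightarrow> ('t \<Rightarrow> 'p \<Rightarrow> nat)
     \<Rightarrow> ('t \<Rightarrow> rat \<times> ext) \<Rightarrow> ('p \<Rightarrow> nat) \<times> ('t \<Rightarrow> rat) \<Rightarrow> ('p \<Rightarrow> nat) \<times> ('t \<Rightarrow> rat) \<Rightarrow> bool" where
  "clock_step Pre Post Inh J s s' =
     (\<exists>c''. tick Pre Inh J (fst s) (snd s) c'' \<and> apply_tr Pre Post Inh J (fst s) c'' (fst s') (snd s'))"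

definition approx :: "('t \<Rightarrow> 'p \<Rightarrow> nat) \<Rightarrow> ('t \<Rightarrow> rat \<times> ext)
     \<Rightarrow> ('p \<Rightarrow> nat) \<times> ('t \<Rightarrow> rat \<times> ext) \<Rightarrow> ('p \<Rightarrow> nat) \<times> ('t \<Rightarrow> rat) \<Rightarrow> bool" where
  "approx Pre J s s' =
     (fst s' = fst s \<and>
      (\<forall>t. (\<not> enabled Pre (fst s) t \<longrightarrow> snd s' t = 0) \<and>
           (enabled Pre (fst s) t \<longrightarrow>
              (case snd (J t) of
                 Fin u \<Rightarrow> (\<exists>v. snd (snd s t) = Fin v \<and> snd s' t = u - v)
               | Infty \<Rightarrow> (fst (snd s t) > 0 \<longrightarrow> snd s' t = fst (J t) - fst (snd s t))
                        \<and> (fst (snd s t) \<le> 0 \<longrightarrow> snd s' t \<ge> fst (J t))))))"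

end

theory Submission
  imports Defs
begin

text \<open>For an enabled transition t with finite static upper bound u and current upper endpoint v,
  the matching clock is u - v, the time t has been enabled. Delaying by \<delta> adds \<delta> to exactly the
  active clocks and shifts exactly the non-inhibited intervals, and the guard that v - \<delta> stays
  nonnegative is the bound \<delta> \<le> mte of the clock semantics. Firing restores J exactly where the
  clock semantics resets to 0, and the guard on the upper endpoint of the fired transition tf gives
  c(tf) \<le> u. The remaining bound, lower endpoint of J(tf) \<le> c(tf), needs an invariant of
  reachable states: a lower endpoint has dropped by at most the elapsed time u - v, so reaching 0
  takes at least the static lower bound.\<close>

lemma residual_le_fire: "(\<lambda>p. M p - Pre tf p) \<le> fire Pre Post M tf"
  by (simp add: fire_def le_fun_def)

lemma enabled_if_le_residual:
  assumes "Pre t \<le> (\<lambda>p. M p - Pre tf p)"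
  shows "enabled Pre M t"
  using assms by (auto simp: enabled_def le_fun_def intro: order_trans[OF _ diff_le_self])

lemma persistent_if_not_newly_enabled:
  assumes "enabled Pre (fire Pre Post M tf) t" and "\<not> newly_enabled Pre Post M tf t"
  shows "t \<noteq> tf" and "Pre t \<le> (\<lambda>p. M p - Pre tf p)"
  using assms by (auto simp: newly_enabled_def enabled_def)

lemma int_delay_nonneg: "int_delay Pre Inh M I \<delta> I' \<Longrightarrow> \<delta> \<ge> 0"
  by (simp add: int_delay_def)

lemma int_delay_frozen:
  "int_delay Pre Inh M I \<delta> I' \<Longrightarrow> enabled Pre M t \<Longrightarrow> inhibited Inh M t \<Longrightarrow> I' t = I t"
  by (simp add: int_delay_def)

lemma int_delay_shifted:
  assumes "int_delay Pre Inh M I \<delta> I'" and "\<not> (enabled Pre M t \<and> inhibited Inh M t)"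
  shows "fst (I' t) = max 0 (fst (I t) - \<delta>)" and "snd (I' t) = ext_minus (snd (I t)) \<delta>"
  using assms by (auto simp: int_delay_def dest: spec[of _ t])

lemma int_delay_upper_nonneg:
  "int_delay Pre Inh M I \<delta> I' \<Longrightarrow> enabled Pre M t \<Longrightarrow> ext_le (Fin 0) (snd (I' t))"
  by (simp add: int_delay_def)

definition lower_lags_upper ::
    "('t \<Rightarrow> 'p \<Rightarrow> nat) \<Rightarrow> ('t \<Rightarrow> rat \<times> ext) \<Rightarrow> ('p \<Rightarrow> nat) \<Rightarrow> ('t \<Rightarrow> rat \<times> ext) \<Rightarrow> bool" where
  "lower_lags_upper Pre J M I = (\<forall>t u. enabled Pre M t \<longrightarrow> snd (J t) = Fin u \<longrightarrow>
      (\<exists>v. snd (I t) = Fin v \<and> fst (J t) - (u - v) \<le> fst (I t)))"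

lemma lower_lags_upper_initial: "lower_lags_upper Pre J M J"
  by (simp add: lower_lags_upper_def)

lemma lower_lags_upper_delay:
  assumes "lower_lags_upper Pre J M I" and "int_delay Pre Inh M I \<delta> I'"
  shows "lower_lags_upper Pre J M I'"
  unfolding lower_lags_upper_def
proof (intro allI impI)
  fix t u assume en: "enabled Pre M t" and u: "snd (J t) = Fin u"
  from assms(1) en u obtain v where v: "snd (I t) = Fin v" "fst (J t) - (u - v) \<le> fst (I t)"
    by (auto simp: lower_lags_upper_def)
  show "\<exists>v. snd (I' t) = Fin v \<and> fst (J t) - (u - v) \<le> fst (I' t)"
  proof (cases "inhibited Inh M t")
    case True
    then show ?thesis using int_delay_frozen[OF assms(2) en] v by auto
  next
    case False
    then have "fst (I' t) = max 0 (fst (I t) - \<delta>)" and "snd (I' t) = Fin (v - \<delta>)"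
      using int_delay_shifted[OF assms(2), of t] v by simp_all
    then show ?thesis using v by auto
  qed
qed

lemma lower_lags_upper_fire:
  assumes "lower_lags_upper Pre J M I" and "int_fire Pre Post Inh J M I tf M' I'"
  shows "lower_lags_upper Pre J M' I'"
  unfolding lower_lags_upper_def
proof (intro allI impI)
  fix t u assume en': "enabled Pre M' t" and u: "snd (J t) = Fin u"
  have M': "M' = fire Pre Post M tf" and I': "I' t = (if newly_enabled Pre Post M tf t then J t else I t)"
    using assms(2) by (auto simp: int_fire_def)
  show "\<exists>v. snd (I' t) = Fin v \<and> fst (J t) - (u - v) \<le> fst (I' t)"
  proof (cases "newly_enabled Pre Post M tf t")
    case True
    then show ?thesis using I' u by simp
  next
    case False
    then have "enabled Pre M t"
      using persistent_if_not_newly_enabled(2)[of Pre Post M tf t] en' M'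
      by (simp add: enabled_if_le_residual)
    then show ?thesis using assms(1) u I' False by (auto simp: lower_lags_upper_def)
  qed
qed

lemma lower_lags_upper_step:
  assumes "lower_lags_upper Pre J M I" and "int_step Pre Post Inh J (M, I) (M', I')"
  shows "lower_lags_upper Pre J M' I'"
  using assms by (auto simp: int_step_def intro: lower_lags_upper_fire[OF lower_lags_upper_delay])

lemma int_reachable_lower_lags_upper:
  assumes "int_reachable Pre Post Inh J M0 (M, I)"
  shows "lower_lags_upper Pre J M I"
proof -
  have "(int_step Pre Post Inh J)\<^sup>*\<^sup>* (M0, J) (M, I)"
    using assms by (simp add: int_reachable_def)
  then show ?thesis
  proof (induction "(M, I)" arbitrary: M I rule: rtranclp_induct)
    case base
    then show ?case by (simp add: lower_lags_upper_initial)
  next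
    case (step s)
    then show ?case
      by (metis lower_lags_upper_step prod.collapse)
  qed
qed

definition delay_clocks ::
    "('t \<Rightarrow> 'p \<Rightarrow> nat) \<Rightarrow> ('t \<Rightarrow> 'p \<Rightarrow> nat) \<Rightarrow> ('p \<Rightarrow> nat) \<Rightarrow> ('t \<Rightarrow> rat) \<Rightarrow> rat \<Rightarrow> 't \<Rightarrow> rat" where
  "delay_clocks Pre Inh M c \<delta> = (\<lambda>t. if active Pre Inh M t then c t + \<delta> else c t)"

definition reset_clocks ::
    "('t \<Rightarrow> 'p \<Rightarrow> nat) \<Rightarrow> ('p \<Rightarrow> nat) \<Rightarrow> 't \<Rightarrow> ('t \<Rightarrow> rat) \<Rightarrow> 't \<Rightarrow> rat" where
  "reset_clocks Pre M tf c =
     (\<lambda>t. if t \<noteq> tf \<and> Pre t \<le> (\<lambda>p. M p - Pre tf p) then c t else 0)"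

lemma clock_val_reset_delay:
  "clock_val c \<Longrightarrow> \<delta> \<ge> 0 \<Longrightarrow> clock_val (reset_clocks Pre M tf (delay_clocks Pre Inh M c \<delta>))"
  by (simp add: clock_val_def reset_clocks_def delay_clocks_def)

lemma le_mte:
  fixes J :: "'t::finite \<Rightarrow> rat \<times> ext"
  assumes "\<And>t u. active Pre Inh M t \<Longrightarrow> snd (J t) = Fin u \<Longrightarrow> \<tau> \<le> u - c t"
  shows "ext_le (Fin \<tau>) (mte Pre Inh J M c)"
proof -
  let ?S = "{u - c t | t u. active Pre Inh M t \<and> snd (J t) = Fin u}"
  have "?S \<subseteq> (\<lambda>t. (case snd (J t) of Fin u \<Rightarrow> u | Infty \<Rightarrow> 0) - c t) ` UNIV"
  proof (rule subsetI)
    fix x assume "x \<in> ?S"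
    then obtain t u where "x = u - c t" and "snd (J t) = Fin u" by blast
    then show "x \<in> (\<lambda>t. (case snd (J t) of Fin u \<Rightarrow> u | Infty \<Rightarrow> 0) - c t) ` UNIV"
      by (intro image_eqI[of _ _ t]) simp_all
  qed
  then have "finite ?S"
    by (rule finite_subset) simp
  moreover have "\<forall>x \<in> ?S. \<tau> \<le> x"
    using assms by blast
  ultimately show ?thesis
    by (simp add: mte_def Let_def Min_ge_iff)
qed

definition clock_fits :: "rat \<times> ext \<Rightarrow> rat \<times> ext \<Rightarrow> rat \<Rightarrow> bool" where
  "clock_fits j i x = (case snd j of
       Fin u \<Rightarrow> (\<exists>v. snd i = Fin v \<and> x = u - v)
     | Infty \<Rightarrow> (fst i > 0 \<longrightarrow> x = fst j - fst i) \<and> (fst i \<le> 0 \<longrightarrow> x \<ge> fst j))"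

lemma approx_iff:
  "approx Pre J (M, I) (M', c) \<longleftrightarrow>
     M' = M \<and> (\<forall>t. if enabled Pre M t then clock_fits (J t) (I t) (c t) else c t = 0)"
  unfolding approx_def clock_fits_def fst_conv snd_conv by (auto split: if_splits)

lemma clock_fits_static: "clock_fits j j 0"
  by (simp add: clock_fits_def split: ext.split)

lemma approx_enabledD:
  "approx Pre J (M, I) (M', c) \<Longrightarrow> enabled Pre M t \<Longrightarrow> clock_fits (J t) (I t) (c t)"
  by (auto simp: approx_iff dest: spec[of _ t])

lemma approx_disabledD:
  "approx Pre J (M, I) (M', c) \<Longrightarrow> \<not> enabled Pre M t \<Longrightarrow> c t = 0"
  by (auto simp: approx_iff dest: spec[of _ t])

lemma clock_fits_shift:
  assumes "clock_fits j i x" and "\<delta> \<ge> 0"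
  shows "clock_fits j (max 0 (fst i - \<delta>), ext_minus (snd i) \<delta>) (x + \<delta>)"
  using assms by (cases "snd j") (auto simp: clock_fits_def max_def)

lemma tick_delay_clocks:
  fixes J :: "'t::finite \<Rightarrow> rat \<times> ext"
  assumes "approx Pre J (M, I) (M, c)" and "int_delay Pre Inh M I \<delta> I'"
  shows "tick Pre Inh J M c (delay_clocks Pre Inh M c \<delta>)"
proof -
  have "\<delta> \<le> u - c t" if act: "active Pre Inh M t" and u: "snd (J t) = Fin u" for t u
  proof -
    have en: "enabled Pre M t" and ninh: "\<not> inhibited Inh M t"
      using act by (simp_all add: active_def)
    from approx_enabledD[OF assms(1) en] u obtain v where "snd (I t) = Fin v" and "c t = u - v"
      by (auto simp: clock_fits_def)
    moreover have "ext_le (Fin 0) (ext_minus (snd (I t)) \<delta>)"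
      using int_delay_upper_nonneg[OF assms(2) en] int_delay_shifted(2)[OF assms(2)] ninh by simp
    ultimately show ?thesis by simp
  qed
  then show ?thesis
    unfolding tick_def delay_clocks_def using int_delay_nonneg[OF assms(2)] le_mte by blast
qed

lemma approx_delay:
  assumes "approx Pre J (M, I) (M, c)" and "int_delay Pre Inh M I \<delta> I'"
  shows "approx Pre J (M, I') (M, delay_clocks Pre Inh M c \<delta>)"
  unfolding approx_iff
proof (intro conjI refl allI)
  fix t
  consider (act) "active Pre Inh M t" | (inh) "enabled Pre M t" "inhibited Inh M t"
    | (dis) "\<not> enabled Pre M t"
    by (auto simp: active_def)
  then show "if enabled Pre M t then clock_fits (J t) (I' t) (delay_clocks Pre Inh M c \<delta> t)
        else delay_clocks Pre Inh M c \<delta> t = 0"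
  proof cases
    case act
    then have en: "enabled Pre M t" and "\<not> inhibited Inh M t"
      by (simp_all add: active_def)
    then have "I' t = (max 0 (fst (I t) - \<delta>), ext_minus (snd (I t)) \<delta>)"
      using int_delay_shifted[OF assms(2), of t] by (simp add: prod_eq_iff)
    moreover have "clock_fits (J t) (I t) (c t)"
      using approx_enabledD[OF assms(1) en] .
    ultimately show ?thesis
      using act en clock_fits_shift int_delay_nonneg[OF assms(2)] by (simp add: delay_clocks_def)
  next
    case inh
    then show ?thesis
      using int_delay_frozen[OF assms(2)] approx_enabledD[OF assms(1)]
      by (simp add: delay_clocks_def active_def)
  next
    case dis
    then show ?thesis
      using approx_disabledD[OF assms(1)] by (simp add: delay_clocks_def active_def)
  qed
qed

lemma approx_fire:
  assumes "approx Pre J (M, I) (M, c)" and "int_fire Pre Post Inh J M I tf M' I'"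
  shows "approx Pre J (M', I') (M', reset_clocks Pre M tf c)"
  unfolding approx_iff
proof (intro conjI refl allI)
  fix t
  have M': "M' = fire Pre Post M tf" and I': "I' t = (if newly_enabled Pre Post M tf t then J t else I t)"
    using assms(2) by (auto simp: int_fire_def)
  show "if enabled Pre M' t then clock_fits (J t) (I' t) (reset_clocks Pre M tf c t)
        else reset_clocks Pre M tf c t = 0"
  proof (cases "enabled Pre M' t")
    case en': True
    show ?thesis
    proof (cases "newly_enabled Pre Post M tf t")
      case True
      then have "t = tf \<or> \<not> Pre t \<le> (\<lambda>p. M p - Pre tf p)"
        by (simp add: newly_enabled_def)
      then have "reset_clocks Pre M tf c t = 0"
        by (auto simp: reset_clocks_def)
      then show ?thesis using True en' I' clock_fits_static by simp
    next
      case False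
      then have "t \<noteq> tf" and res: "Pre t \<le> (\<lambda>p. M p - Pre tf p)"
        using persistent_if_not_newly_enabled[of Pre Post M tf t] en' M' by simp_all
      moreover have "clock_fits (J t) (I t) (c t)"
        using approx_enabledD[OF assms(1) enabled_if_le_residual[OF res]] .
      ultimately show ?thesis
        using en' I' False res by (simp add: reset_clocks_def)
    qed
  next
    case False
    have "\<not> Pre t \<le> (\<lambda>p. M p - Pre tf p)"
    proof
      assume "Pre t \<le> (\<lambda>p. M p - Pre tf p)"
      then have "enabled Pre M' t"
        using order_trans[OF _ residual_le_fire] M' by (simp add: enabled_def)
      with False show False ..
    qed
    then show ?thesis using False by (simp add: reset_clocks_def)
  qed
qed

lemma apply_tr_reset_clocks:
  assumes "approx Pre J (M, I) (M, c)" and "lower_lags_upper Pre J M I"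
    and "int_fire Pre Post Inh J M I tf M' I'" and "ext_le (Fin 0) (snd (I tf))"
  shows "apply_tr Pre Post Inh J M c M' (reset_clocks Pre M tf c)"
proof -
  have act: "active Pre Inh M tf" and low: "fst (I tf) = 0" and M': "M' = fire Pre Post M tf"
    using assms(3) by (auto simp: int_fire_def)
  have en: "enabled Pre M tf"
    using act by (simp add: active_def)
  have fits: "clock_fits (J tf) (I tf) (c tf)"
    using approx_enabledD[OF assms(1) en] .
  have "fst (J tf) \<le> c tf \<and> ext_le (Fin (c tf)) (snd (J tf))"
  proof (cases "snd (J tf)")
    case (Fin u)
    with fits obtain v where "snd (I tf) = Fin v" and "c tf = u - v"
      by (auto simp: clock_fits_def)
    moreover have "fst (J tf) - (u - v) \<le> fst (I tf)"
      using assms(2) en Fin calculation(1) by (auto simp: lower_lags_upper_def)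
    ultimately show ?thesis
      using Fin low assms(4) by simp
  next
    case Infty
    then show ?thesis using fits low by (simp add: clock_fits_def)
  qed
  then show ?thesis
    unfolding apply_tr_def using act M' by (intro exI[of _ tf]) (simp add: reset_clocks_def)
qed

theorem mainTheorem2:
  fixes Pre Post Inh :: "'t::finite \<Rightarrow> 'p::finite \<Rightarrow> nat"
    and M0 M M' :: "'p \<Rightarrow> nat"
    and J I I' :: "'t \<Rightarrow> rat \<times> ext"
    and c :: "'t \<Rightarrow> rat"
  assumes "valid_J J"
    and "int_reachable Pre Post Inh J M0 (M, I)"
    and "int_step Pre Post Inh J (M, I) (M', I')"
    and "clock_val c"
    and "approx Pre J (M, I) (M, c)"
  shows "\<exists>c'. clock_val c' \<and> clock_step Pre Post Inh J (M, c) (M', c')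
              \<and> approx Pre J (M', I') (M', c')"
proof -
  from assms(3) obtain \<delta> I'' tf where delay: "int_delay Pre Inh M I \<delta> I''"
    and fire: "int_fire Pre Post Inh J M I'' tf M' I'"
    by (auto simp: int_step_def)
  define c'' where "c'' = delay_clocks Pre Inh M c \<delta>"
  have approx'': "approx Pre J (M, I'') (M, c'')"
    unfolding c''_def using assms(5) delay by (rule approx_delay)
  have inv'': "lower_lags_upper Pre J M I''"
    using int_reachable_lower_lags_upper[OF assms(2)] delay by (rule lower_lags_upper_delay)
  have "ext_le (Fin 0) (snd (I'' tf))"
    using int_delay_upper_nonneg[OF delay] fire by (simp add: int_fire_def active_def)
  then have "apply_tr Pre Post Inh J M c'' M' (reset_clocks Pre M tf c'')"
    using apply_tr_reset_clocks[OF approx'' inv'' fire] by blast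
  moreover have "tick Pre Inh J M c c''"
    unfolding c''_def using assms(5) delay by (rule tick_delay_clocks)
  moreover have "clock_val (reset_clocks Pre M tf c'')"
    unfolding c''_def using assms(4) int_delay_nonneg[OF delay] by (rule clock_val_reset_delay)
  moreover have "approx Pre J (M', I') (M', reset_clocks Pre M tf c'')"
    using approx'' fire by (rule approx_fire)
  ultimately show ?thesis
    unfolding clock_step_def by auto
qed

end
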